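(* Let $C=(v_0v_1\cdots v_{2i-1})$ be a convex cycle of length $2i\ge 4$ in a mirror graph $G$. Then for every edge $ab$ with $ab\,\Theta\,v_0v_1$, either both $a,b$ lie in $W_{v_2v_1}\cap W_{v_3v_2}\cap\cdots\cap W_{v_iv_{i-1}}$, or both $a,b$ lie in the intersection of the complements $\bigcap_{j=2}^{i}\bigl(V(G)\setminus W_{v_jv_{j-1}}\bigr)$.
   Context: A mirror graph is a finite connected simple graph $G$ admitting a partition $\{E_1,\dots,E_k\}$ of its edges such that for every $i$ there is an automorphism $\alpha_i$ swapping the endpoints of every edge of $E_i$, with $G-E_i$ having exactly two components that $\alpha_i$ maps isomorphically onto each other. Mirror graphs are partial cubes; $\Theta$ is the relation on edges $ab\,\Theta\,xy$ iff $d(a,x)+d(b,y)\neq d(a,y)+d(b,x)$ ($d$ the shortest-path distance), an equivalence relation on edges of a partial cube. For an edge $uv$, $W_{uv}=\{w\in V(G): d(u,w)<d(v,w)\}$. A cycle is convex if every shortest path of $G$ between two of its vertices lies on it. *)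

theory Defs
  imports Main
begin

definition simple_graph :: "'a set \<Rightarrow> ('a \<Rightarrow> 'a \<Rightarrow> bool) \<Rightarrow> bool" where
  "simple_graph V E \<longleftrightarrow> finite V \<and> (\<forall>u v. E u v \<longrightarrow> u \<in> V \<and> v \<in> V)
     \<and> (\<forall>u v. E u v \<longrightarrow> E v u) \<and> (\<forall>u. \<not> E u u)"

definition walk :: "'a set \<Rightarrow> ('a \<Rightarrow> 'a \<Rightarrow> bool) \<Rightarrow> 'a list \<Rightarrow> bool" where
  "walk V E xs \<longleftrightarrow> xs \<noteq> [] \<and> set xs \<subseteq> V \<and> (\<forall>k < length xs - 1. E (xs ! k) (xs ! Suc k))"

definition connected_graph :: "'a set \<Rightarrow> ('a \<Rightarrow> 'a \<Rightarrow> bool) \<Rightarrow> bool" where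
  "connected_graph V E \<longleftrightarrow> V \<noteq> {} \<and>
     (\<forall>u\<in>V. \<forall>w\<in>V. \<exists>xs. walk V E xs \<and> hd xs = u \<and> last xs = w)"

definition gdist :: "'a set \<Rightarrow> ('a \<Rightarrow> 'a \<Rightarrow> bool) \<Rightarrow> 'a \<Rightarrow> 'a \<Rightarrow> nat" where
  "gdist V E u w = (LEAST n. \<exists>xs. walk V E xs \<and> hd xs = u \<and> last xs = w \<and> length xs = Suc n)"

definition edges :: "('a \<Rightarrow> 'a \<Rightarrow> bool) \<Rightarrow> 'a set set" where
  "edges E = {{u, v} | u v. E u v}"

definition components :: "'a set \<Rightarrow> ('a \<Rightarrow> 'a \<Rightarrow> bool) \<Rightarrow> 'a set set" where
  "components V E = {{w \<in> V. \<exists>xs. walk V E xs \<and> hd xs = u \<and> last xs = w} | u. u \<in> V}"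

definition automorphism :: "'a set \<Rightarrow> ('a \<Rightarrow> 'a \<Rightarrow> bool) \<Rightarrow> ('a \<Rightarrow> 'a) \<Rightarrow> bool" where
  "automorphism V E \<alpha> \<longleftrightarrow> bij_betw \<alpha> V V \<and> (\<forall>u\<in>V. \<forall>v\<in>V. E u v \<longleftrightarrow> E (\<alpha> u) (\<alpha> v))"

definition delete_edges :: "('a \<Rightarrow> 'a \<Rightarrow> bool) \<Rightarrow> 'a set set \<Rightarrow> 'a \<Rightarrow> 'a \<Rightarrow> bool" where
  "delete_edges E F = (\<lambda>u v. E u v \<and> {u, v} \<notin> F)"

definition mirror_graph :: "'a set \<Rightarrow> ('a \<Rightarrow> 'a \<Rightarrow> bool) \<Rightarrow> bool" where
  "mirror_graph V E \<longleftrightarrow> simple_graph V E \<and> connected_graph V E \<and>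
     (\<exists>P. \<Union>P = edges E \<and> {} \<notin> P \<and> (\<forall>F1\<in>P. \<forall>F2\<in>P. F1 \<noteq> F2 \<longrightarrow> F1 \<inter> F2 = {}) \<and>
       (\<forall>F\<in>P. \<exists>\<alpha>. automorphism V E \<alpha> \<and>
          (\<forall>u v. E u v \<and> {u, v} \<in> F \<longrightarrow> \<alpha> u = v \<and> \<alpha> v = u) \<and>
          (\<exists>A B. components V (delete_edges E F) = {A, B} \<and> A \<noteq> B \<and>
             \<alpha> ` A = B \<and> \<alpha> ` B = A \<and>
             (\<forall>u\<in>A. \<forall>w\<in>A. delete_edges E F u w \<longleftrightarrow> delete_edges E F (\<alpha> u) (\<alpha> w)) \<and>
             (\<forall>u\<in>B. \<forall>w\<in>B. delete_edges E F u w \<longleftrightarrow> delete_edges E F (\<alpha> u) (\<alpha> w)))))"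

definition Theta :: "'a set \<Rightarrow> ('a \<Rightarrow> 'a \<Rightarrow> bool) \<Rightarrow> 'a \<Rightarrow> 'a \<Rightarrow> 'a \<Rightarrow> 'a \<Rightarrow> bool" where
  "Theta V E a b x y \<longleftrightarrow> gdist V E a x + gdist V E b y \<noteq> gdist V E a y + gdist V E b x"

definition W :: "'a set \<Rightarrow> ('a \<Rightarrow> 'a \<Rightarrow> bool) \<Rightarrow> 'a \<Rightarrow> 'a \<Rightarrow> 'a set" where
  "W V E u v = {w \<in> V. gdist V E u w < gdist V E v w}"

definition is_cycle :: "'a set \<Rightarrow> ('a \<Rightarrow> 'a \<Rightarrow> bool) \<Rightarrow> (nat \<Rightarrow> 'a) \<Rightarrow> nat \<Rightarrow> bool" where
  "is_cycle V E v n \<longleftrightarrow> n \<ge> 3 \<and> inj_on v {..<n} \<and> v ` {..<n} \<subseteq> V \<and>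
     (\<forall>k<n. E (v k) (v (Suc k mod n)))"

definition cycle_edges :: "(nat \<Rightarrow> 'a) \<Rightarrow> nat \<Rightarrow> 'a set set" where
  "cycle_edges v n = {{v k, v (Suc k mod n)} | k. k < n}"

definition convex_cycle :: "'a set \<Rightarrow> ('a \<Rightarrow> 'a \<Rightarrow> bool) \<Rightarrow> (nat \<Rightarrow> 'a) \<Rightarrow> nat \<Rightarrow> bool" where
  "convex_cycle V E v n \<longleftrightarrow> is_cycle V E v n \<and>
     (\<forall>xs. walk V E xs \<and> hd xs \<in> v ` {..<n} \<and> last xs \<in> v ` {..<n} \<and>
           length xs = Suc (gdist V E (hd xs) (last xs)) \<longrightarrow>
        set xs \<subseteq> v ` {..<n} \<and> (\<forall>k < length xs - 1. {xs ! k, xs ! Suc k} \<in> cycle_edges v n))"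

end

theory Submission
  imports Defs
begin

text \<open>
  Each class \<open>F\<close> of a mirror partition is cut out by a reflection \<open>\<alpha>\<close> swapping the two
  components \<open>A\<close>, \<open>B\<close> of \<open>G - F\<close>. Reflecting a shortest path behind its crossing edge shows
  that \<open>\<alpha>\<close> moves every vertex of \<open>B\<close> strictly closer to each vertex of \<open>A\<close>; hence
  \<open>W x y = A\<close> for every edge \<open>xy\<close> of \<open>F\<close> with \<open>x \<in> A\<close>, and \<open>\<Theta>\<close> means lying in a common class.

  On a convex cycle of length \<open>2 i\<close> graph distances are cyclic distances, so opposite edges
  are \<open>\<Theta>\<close>-related and the reflection of the class of the edge \<open>v (j - 1) v j\<close> maps the cycle
  into itself. Therefore every vertex lies on the same side of that cut as its nearest cycle
  vertex \<open>v p\<close>, i.e. in \<open>W (v j) (v (j - 1))\<close> iff \<open>j \<le> p \<le> j + i - 1\<close>. For an edge \<open>ab\<close>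
  with \<open>ab \<Theta> v 0 v 1\<close> the nearest positions of \<open>a\<close> and \<open>b\<close> are separated by the cut of
  \<open>v 0 v 1\<close> but not by those of \<open>v 1 v 2\<close> and \<open>v (i - 1) v i\<close>, which forces them to be
  \<open>{0, 1}\<close> or \<open>{i, i + 1}\<close>.
\<close>

lemma list_first_crossing:
  assumes "xs \<noteq> []" "\<not> P (hd xs)" "P (last xs)"
  shows "\<exists>m. 0 < m \<and> m < length xs \<and> \<not> P (xs ! (m - 1)) \<and> P (xs ! m)"
proof -
  have ex: "\<exists>m. m < length xs \<and> P (xs ! m)"
    using assms by (intro exI[of _ "length xs - 1"]) (auto simp: last_conv_nth)
  define m where "m = (LEAST m. m < length xs \<and> P (xs ! m))"
  have m: "m < length xs" "P (xs ! m)" using LeastI_ex[OF ex] unfolding m_def by auto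
  have "0 < m"
  proof (rule ccontr)
    assume "\<not> 0 < m"
    then show False using m assms by (simp add: hd_conv_nth)
  qed
  moreover have "\<not> P (xs ! (m - 1))"
    using not_less_Least[of "m - 1" "\<lambda>m. m < length xs \<and> P (xs ! m)"] m \<open>0 < m\<close>
    unfolding m_def by linarith
  ultimately show ?thesis using m by blast
qed

lemma walk_singleton_iff [simp]: "walk V R [x] \<longleftrightarrow> x \<in> V"
  by (simp add: walk_def)

lemma walk_Cons_Cons: "walk V R (x # y # xs) \<longleftrightarrow> x \<in> V \<and> R x y \<and> walk V R (y # xs)"
proof -
  have "(\<forall>k < length (x # y # xs) - 1. R ((x # y # xs) ! k) ((x # y # xs) ! Suc k)) \<longleftrightarrow>
        R x y \<and> (\<forall>k < length (y # xs) - 1. R ((y # xs) ! k) ((y # xs) ! Suc k))"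
    by (auto simp: less_Suc_eq_0_disj)
  then show ?thesis by (auto simp: walk_def)
qed

lemma walk_nth_mem: "walk V R xs \<Longrightarrow> k < length xs \<Longrightarrow> xs ! k \<in> V"
  unfolding walk_def by auto

lemma walk_nth_step: "walk V R xs \<Longrightarrow> Suc k < length xs \<Longrightarrow> R (xs ! k) (xs ! Suc k)"
  unfolding walk_def by auto

lemma walk_append:
  assumes "walk V R xs" "walk V R ys" "R (last xs) (hd ys)"
  shows "walk V R (xs @ ys)"
  using assms
proof (induction xs rule: induct_list012)
  case 1
  then show ?case by simp
next
  case (2 x)
  then show ?case by (cases ys) (simp_all add: walk_Cons_Cons)
next
  case (3 x y zs)
  then show ?case by (simp add: walk_Cons_Cons)
qed

lemma walk_join:
  assumes xs: "walk V R xs" and ys: "walk V R ys" and "last xs = hd ys"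
  shows "walk V R (xs @ tl ys)" "hd (xs @ tl ys) = hd xs" "last (xs @ tl ys) = last ys"
    "length (xs @ tl ys) = length xs + length ys - 1"
proof -
  have "xs \<noteq> []" "ys \<noteq> []" using xs ys by (simp_all add: walk_def)
  then obtain y ys' where ys_eq: "ys = y # ys'" by (cases ys) auto
  show "walk V R (xs @ tl ys)"
  proof (cases ys')
    case Nil
    then show ?thesis using xs ys_eq by simp
  next
    case (Cons z zs)
    then show ?thesis
      using walk_append[OF xs, of ys'] ys ys_eq \<open>last xs = hd ys\<close> by (simp add: walk_Cons_Cons)
  qed
  show "hd (xs @ tl ys) = hd xs" "length (xs @ tl ys) = length xs + length ys - 1"
    using \<open>xs \<noteq> []\<close> ys_eq by simp_all
  show "last (xs @ tl ys) = last ys"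
    using \<open>xs \<noteq> []\<close> ys_eq \<open>last xs = hd ys\<close> by (cases ys') simp_all
qed

lemma walk_map:
  assumes "walk V R xs" "\<And>x. x \<in> V \<Longrightarrow> f x \<in> V'"
    and "\<And>x y. x \<in> V \<Longrightarrow> y \<in> V \<Longrightarrow> R x y \<Longrightarrow> R' (f x) (f y)"
  shows "walk V' R' (map f xs)"
  using assms unfolding walk_def by (auto simp: subset_iff)

lemma walk_rev:
  assumes "walk V R xs" "symp R"
  shows "walk V R (rev xs)"
  unfolding walk_def
proof (intro conjI allI impI)
  fix k assume k: "k < length (rev xs) - 1"
  define m where "m = length xs - Suc (Suc k)"
  have "Suc m < length xs" "Suc m = length xs - Suc k" using k unfolding m_def by auto
  then have "R (xs ! Suc m) (xs ! m)" using assms walk_nth_step sympD by metis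
  then show "R (rev xs ! k) (rev xs ! Suc k)"
    using k \<open>Suc m = length xs - Suc k\<close> by (simp add: rev_nth m_def)
qed (use assms in \<open>auto simp: walk_def\<close>)

lemma walk_drop: "walk V R xs \<Longrightarrow> k < length xs \<Longrightarrow> walk V R (drop k xs)"
  unfolding walk_def by (auto simp: set_drop_subset[THEN subsetD] dest: in_set_dropD)

lemma walk_take: "walk V R xs \<Longrightarrow> 0 < k \<Longrightarrow> walk V R (take k xs)"
  unfolding walk_def by (auto dest: in_set_takeD)

definition reachable :: "'a set \<Rightarrow> ('a \<Rightarrow> 'a \<Rightarrow> bool) \<Rightarrow> 'a \<Rightarrow> 'a \<Rightarrow> bool" where
  "reachable V R u w \<longleftrightarrow> (\<exists>xs. walk V R xs \<and> hd xs = u \<and> last xs = w)"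

lemma components_reachable: "components V R = {{w \<in> V. reachable V R u w} | u. u \<in> V}"
  unfolding components_def reachable_def by simp

lemma reachable_refl: "u \<in> V \<Longrightarrow> reachable V R u u"
  unfolding reachable_def by (auto intro!: exI[of _ "[u]"])

lemma reachable_trans:
  assumes "reachable V R u w" "reachable V R w z"
  shows "reachable V R u z"
proof -
  obtain xs ys where "walk V R xs" "hd xs = u" "last xs = w" "walk V R ys" "hd ys = w" "last ys = z"
    using assms unfolding reachable_def by blast
  then have "walk V R (xs @ tl ys)" "hd (xs @ tl ys) = u" "last (xs @ tl ys) = z"
    using walk_join(1-3)[of V R xs ys] by simp_all
  then show ?thesis unfolding reachable_def by blast
qed

lemma reachable_sym:
  assumes "reachable V R u w" "symp R"
  shows "reachable V R w u"
proof -
  obtain xs where xs: "walk V R xs" "hd xs = u" "last xs = w"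
    using assms(1) unfolding reachable_def by blast
  then have "xs \<noteq> []" by (simp add: walk_def)
  then show ?thesis unfolding reachable_def using xs walk_rev[OF xs(1) assms(2)]
    by (intro exI[of _ "rev xs"]) (auto simp: hd_rev last_rev)
qed

lemma reachable_step:
  assumes "reachable V R u w" "R w z" "w \<in> V" "z \<in> V"
  shows "reachable V R u z"
proof -
  have "walk V R [w, z]" using assms by (simp add: walk_Cons_Cons)
  then show ?thesis
    using reachable_trans[OF assms(1)] unfolding reachable_def by fastforce
qed

lemma components_cover:
  assumes "w \<in> V"
  shows "\<exists>X\<in>components V R. w \<in> X"
proof
  show "{z \<in> V. reachable V R w z} \<in> components V R"
    using assms unfolding components_reachable by blast
  show "w \<in> {z \<in> V. reachable V R w z}" using assms reachable_refl by fast
qed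

lemma components_closed:
  assumes "X \<in> components V R" "p \<in> X" "R p q" "q \<in> V"
  shows "q \<in> X"
proof -
  obtain u where X: "X = {w \<in> V. reachable V R u w}"
    using assms(1) unfolding components_reachable by blast
  then show ?thesis using assms(2-4) reachable_step[of V R u p q] by simp
qed

lemma components_disjoint:
  assumes "X \<in> components V R" "Y \<in> components V R" "X \<noteq> Y" "symp R"
  shows "X \<inter> Y = {}"
proof (rule ccontr)
  assume "X \<inter> Y \<noteq> {}"
  then obtain w where w: "w \<in> X" "w \<in> Y" by blast
  obtain u u' where X: "X = {w \<in> V. reachable V R u w}" and Y: "Y = {w \<in> V. reachable V R u' w}"
    using assms(1,2) unfolding components_reachable by blast
  have "reachable V R u w" "reachable V R u' w" using w X Y by blast+
  then have "reachable V R u u'" "reachable V R u' u"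
    using reachable_trans[of V R] reachable_sym[of V R, OF _ assms(4)] by blast+
  then have "reachable V R u z \<longleftrightarrow> reachable V R u' z" for z
    using reachable_trans[of V R] by blast
  then have "X = Y" unfolding X Y by simp
  with assms(3) show False ..
qed

locale connected_simple_graph =
  fixes V :: "'a set" and E :: "'a \<Rightarrow> 'a \<Rightarrow> bool"
  assumes simple: "simple_graph V E" and connected: "connected_graph V E"
begin

abbreviation "d \<equiv> gdist V E"

lemma adj_in_V: "E x y \<Longrightarrow> x \<in> V \<and> y \<in> V"
  using simple unfolding simple_graph_def by blast

lemma symp_adj: "symp E"
  using simple unfolding simple_graph_def symp_def by blast

lemmas adj_sym = sympD[OF symp_adj]

lemma shortest_walk_exists:
  assumes "u \<in> V" "w \<in> V"
  shows "\<exists>xs. walk V E xs \<and> hd xs = u \<and> last xs = w \<and> length xs = Suc (d u w)"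
proof -
  obtain xs where xs: "walk V E xs" "hd xs = u" "last xs = w"
    using connected assms unfolding connected_graph_def by blast
  then have "xs \<noteq> []" by (simp add: walk_def)
  then have "\<exists>n xs. walk V E xs \<and> hd xs = u \<and> last xs = w \<and> length xs = Suc n"
    using xs by (intro exI[of _ "length xs - 1"] exI[of _ xs]) simp
  from LeastI_ex[OF this] show ?thesis unfolding gdist_def by blast
qed

lemma gdist_le_walk:
  assumes "walk V E xs" "hd xs = u" "last xs = w"
  shows "d u w \<le> length xs - 1"
proof -
  have "length xs = Suc (length xs - 1)" using assms by (simp add: walk_def)
  then show ?thesis unfolding gdist_def using assms by (intro Least_le) blast
qed

lemma gdist_sym:
  assumes "u \<in> V" "w \<in> V"
  shows "d u w = d w u"
proof -
  have "d x y \<le> d y x" if xy: "x \<in> V" "y \<in> V" for x y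
  proof -
    obtain xs where xs: "walk V E xs" "hd xs = y" "last xs = x" "length xs = Suc (d y x)"
      using shortest_walk_exists[OF xy(2,1)] by blast
    then have "xs \<noteq> []" by (simp add: walk_def)
    then show ?thesis
      using gdist_le_walk[OF walk_rev[OF xs(1) symp_adj]] xs by (simp add: hd_rev last_rev)
  qed
  then show ?thesis using assms by (simp add: order_antisym)
qed

lemma gdist_adj_le:
  assumes "E x y" "w \<in> V"
  shows "d w y \<le> Suc (d w x)"
proof -
  obtain xs where xs: "walk V E xs" "hd xs = w" "last xs = x" "length xs = Suc (d w x)"
    using shortest_walk_exists assms adj_in_V by blast
  have "walk V E (xs @ [y])" using walk_append[OF xs(1), of "[y]"] xs assms adj_in_V by simp
  then show ?thesis using gdist_le_walk[of "xs @ [y]" w y] xs by (simp add: walk_def)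
qed

end

subsection \<open>Mirror cuts\<close>

lemma symp_delete_edges: "symp E \<Longrightarrow> symp (delete_edges E F)"
  unfolding delete_edges_def symp_def by (auto simp: insert_commute)

locale mirror_cut = connected_simple_graph +
  fixes F :: "'a set set" and \<alpha> :: "'a \<Rightarrow> 'a" and A B :: "'a set"
  assumes aut: "automorphism V E \<alpha>"
    and swap: "\<forall>u v. E u v \<and> {u, v} \<in> F \<longrightarrow> \<alpha> u = v \<and> \<alpha> v = u"
    and comps: "components V (delete_edges E F) = {A, B}"
    and A_ne_B: "A \<noteq> B" and image_A: "\<alpha> ` A = B" and image_B: "\<alpha> ` B = A"
begin

lemma mirror_cut_swap: "mirror_cut V E F \<alpha> B A"
  using comps A_ne_B aut swap image_A image_B
  by unfold_locales (simp_all add: insert_commute)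

lemma sides_cover: "w \<in> V \<Longrightarrow> w \<in> A \<or> w \<in> B"
  using components_cover[of w V "delete_edges E F"] comps by blast

lemma sides_disjoint: "A \<inter> B = {}"
  using components_disjoint[of A V "delete_edges E F" B] comps A_ne_B
    symp_delete_edges[OF symp_adj] by blast

lemma sides_subset: "A \<subseteq> V" "B \<subseteq> V"
  using comps unfolding components_reachable by blast+

lemma side_closed: "X \<in> {A, B} \<Longrightarrow> p \<in> X \<Longrightarrow> E p q \<Longrightarrow> {p, q} \<notin> F \<Longrightarrow> q \<in> X"
  using components_closed[of X V "delete_edges E F" p q] comps adj_in_V
  unfolding delete_edges_def by blast

lemma reflect_in_V: "x \<in> V \<Longrightarrow> \<alpha> x \<in> V"
  using aut unfolding automorphism_def bij_betw_def by blast

lemma reflect_adj: "x \<in> V \<Longrightarrow> y \<in> V \<Longrightarrow> E x y \<Longrightarrow> E (\<alpha> x) (\<alpha> y)"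
  using aut unfolding automorphism_def by blast

lemma reflect_cut_edge: "E p q \<Longrightarrow> {p, q} \<in> F \<Longrightarrow> \<alpha> p = q"
  using swap by blast

lemma adj_side_iff:
  assumes "E p q" "p \<in> A"
  shows "q \<in> B \<longleftrightarrow> {p, q} \<in> F"
proof
  assume "q \<in> B"
  then show "{p, q} \<in> F" using side_closed[of A p q] assms sides_disjoint by blast
next
  assume "{p, q} \<in> F"
  then show "q \<in> B" using reflect_cut_edge[OF assms(1)] assms(2) image_A by blast
qed

lemma non_cut_edge_same_side:
  assumes "E a b" "{a, b} \<notin> F"
  shows "a \<in> A \<longleftrightarrow> b \<in> A"
  using side_closed[of A a b] side_closed[of A b a] assms adj_sym by (auto simp: insert_commute)

lemma cut_edge_separates:
  assumes "E a b" "{a, b} \<in> F"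
  shows "a \<in> A \<longleftrightarrow> b \<notin> A"
proof
  assume "a \<in> A"
  then show "b \<notin> A" using adj_side_iff assms sides_disjoint by blast
next
  assume "b \<notin> A"
  show "a \<in> A"
  proof (rule ccontr)
    assume "a \<notin> A"
    then have "a \<in> B" using sides_cover adj_in_V[OF assms(1)] by blast
    then show False using reflect_cut_edge[OF assms] image_B \<open>b \<notin> A\<close> by blast
  qed
qed

text \<open>Reflecting the part of a shortest \<open>w\<close>--\<open>z\<close> path behind its first crossing edge \<open>pq\<close>
  yields a walk from \<open>w\<close> to \<open>\<alpha> z\<close> that skips the edge, since \<open>\<alpha> q = p\<close>.\<close>

lemma gdist_reflect_less:
  assumes w: "w \<in> A" and z: "z \<in> B"
  shows "d w (\<alpha> z) < d w z"
proof -
  have "w \<in> V" "z \<in> V" using w z sides_subset by auto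
  then obtain xs where xs: "walk V E xs" "hd xs = w" "last xs = z" "length xs = Suc (d w z)"
    using shortest_walk_exists by blast
  have "xs \<noteq> []" using xs by (simp add: walk_def)
  moreover have "w \<notin> B" using w sides_disjoint by blast
  ultimately obtain m where m: "0 < m" "m < length xs" "xs ! (m - 1) \<notin> B" "xs ! m \<in> B"
    using list_first_crossing[of xs "\<lambda>x. x \<in> B"] xs z by auto
  have "xs ! (m - 1) \<in> V" using walk_nth_mem[OF xs(1), of "m - 1"] m by simp
  then have "xs ! (m - 1) \<in> A" using m(3) sides_cover by blast
  moreover have "E (xs ! (m - 1)) (xs ! m)"
    using walk_nth_step[OF xs(1), of "m - 1"] m by simp
  ultimately have reflect_m: "\<alpha> (xs ! m) = xs ! (m - 1)"
    using adj_side_iff m(4) reflect_cut_edge adj_sym by (metis insert_commute)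
  define ys where "ys = map \<alpha> (drop m xs)"
  have ys: "walk V E ys" "hd ys = xs ! (m - 1)" "last ys = \<alpha> z" "length ys = length xs - m"
    unfolding ys_def
    using walk_map[OF walk_drop[OF xs(1) m(2)], of \<alpha>] reflect_in_V reflect_adj reflect_m m xs
    by (simp_all add: hd_map hd_drop_conv_nth last_map)
  have front: "walk V E (take m xs)" "hd (take m xs) = w" "last (take m xs) = xs ! (m - 1)"
    using walk_take[OF xs(1) m(1)] xs m \<open>xs \<noteq> []\<close> by (simp_all add: last_conv_nth)
  have "d w (\<alpha> z) \<le> length (take m xs @ tl ys) - 1"
    using walk_join[OF front(1) ys(1)] front ys by (intro gdist_le_walk) simp_all
  then show ?thesis using walk_join(4)[OF front(1) ys(1)] front ys m xs by simp
qed

lemma gdist_cut_edge: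
  assumes "E x y" "{x, y} \<in> F" "x \<in> A" "w \<in> A"
  shows "d w y = Suc (d w x)"
proof -
  have "y \<in> B" using adj_side_iff assms(1-3) by blast
  moreover have "\<alpha> y = x" using reflect_cut_edge[OF adj_sym[OF assms(1)]] assms(2)
    by (simp add: insert_commute)
  ultimately have "d w x < d w y" using gdist_reflect_less[OF assms(4)] by metis
  moreover have "d w y \<le> Suc (d w x)" using gdist_adj_le assms sides_subset by blast
  ultimately show ?thesis by simp
qed

lemma gdist_cut_edge_far:
  assumes "E x y" "{x, y} \<in> F" "x \<in> A" "w \<in> B"
  shows "d w x = Suc (d w y)"
proof -
  interpret swapped: mirror_cut V E F \<alpha> B A by (rule mirror_cut_swap)
  have "y \<in> B" using adj_side_iff assms(1-3) by blast
  then show ?thesis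
    using swapped.gdist_cut_edge[OF adj_sym[OF assms(1)] _ _ assms(4)] assms(2)
    by (simp add: insert_commute)
qed

lemma W_cut_edge:
  assumes "E x y" "{x, y} \<in> F" "x \<in> A"
  shows "W V E x y = A"
proof -
  have xy: "x \<in> V" "y \<in> V" using adj_in_V assms(1) by auto
  have "w \<in> W V E x y \<longleftrightarrow> w \<in> A" if w: "w \<in> V" for w
  proof (cases "w \<in> A")
    case True
    then show ?thesis
      using gdist_cut_edge[OF assms True] gdist_sym[OF xy(1) w] gdist_sym[OF xy(2) w] w
      unfolding W_def by simp
  next
    case False
    then have "w \<in> B" using sides_cover w by blast
    then show ?thesis
      using False gdist_cut_edge_far[OF assms] gdist_sym[OF xy(1) w] gdist_sym[OF xy(2) w]
      unfolding W_def by simp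
  qed
  then show ?thesis using sides_subset unfolding W_def by blast
qed

lemma Theta_cut_edge_iff:
  assumes ab: "E a b" and xy: "E x y" "{x, y} \<in> F" "x \<in> A"
  shows "Theta V E a b x y \<longleftrightarrow> {a, b} \<in> F"
proof -
  have shift: "w \<in> A \<and> d w y = Suc (d w x) \<or> w \<notin> A \<and> d w x = Suc (d w y)" if "w \<in> V" for w
    using that sides_cover sides_disjoint gdist_cut_edge[OF xy] gdist_cut_edge_far[OF xy] by blast
  have "a \<in> V" "b \<in> V" using adj_in_V ab by auto
  then have "Theta V E a b x y \<longleftrightarrow> (a \<in> A \<longleftrightarrow> b \<notin> A)"
    using shift[of a] shift[of b] unfolding Theta_def by auto
  then show ?thesis using cut_edge_separates[OF ab] non_cut_edge_same_side[OF ab] by blast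
qed

end

subsection \<open>Distance along a cycle\<close>

definition cyc_dist :: "nat \<Rightarrow> nat \<Rightarrow> nat \<Rightarrow> nat" where
  "cyc_dist n p q = min (if p \<le> q then q - p else p - q) (n - (if p \<le> q then q - p else p - q))"

lemma cyc_dist_sym: "cyc_dist n p q = cyc_dist n q p"
  unfolding cyc_dist_def by auto

lemma cyc_dist_adj_le:
  assumes "p < n" "r < n" "r' < n" "r' = Suc r mod n \<or> r = Suc r' mod n"
  shows "cyc_dist n p r' \<le> Suc (cyc_dist n p r)"
  using assms(4)
proof
  assume "r' = Suc r mod n"
  then show ?thesis using assms(1,2) by (cases "Suc r = n") (auto simp: cyc_dist_def)
next
  assume "r = Suc r' mod n"
  then show ?thesis using assms(1,3) by (cases "Suc r' = n") (auto simp: cyc_dist_def)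
qed

lemma cyc_dist_closer_iff:
  assumes "1 \<le> j" "j \<le> i" "k < 2 * i"
  shows "cyc_dist (2 * i) j k < cyc_dist (2 * i) (j - 1) k \<longleftrightarrow> j \<le> k \<and> k \<le> j + i - 1"
  using assms unfolding cyc_dist_def min_def by (auto split: if_splits)

lemma half_cycle_dichotomy:
  fixes i p q :: nat
  assumes "2 \<le> i" "p < 2 * i" "q < 2 * i"
    and "1 \<le> p \<and> p \<le> i \<longleftrightarrow> \<not> (1 \<le> q \<and> q \<le> i)"
    and "2 \<le> p \<and> p \<le> i + 1 \<longleftrightarrow> 2 \<le> q \<and> q \<le> i + 1"
    and "i \<le> p \<and> p \<le> 2 * i - 1 \<longleftrightarrow> i \<le> q \<and> q \<le> 2 * i - 1"
  shows "(\<forall>j\<in>{2..i}. j \<le> p \<and> p \<le> j + i - 1 \<and> j \<le> q \<and> q \<le> j + i - 1) \<or>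
         (\<forall>j\<in>{2..i}. \<not> (j \<le> p \<and> p \<le> j + i - 1) \<and> \<not> (j \<le> q \<and> q \<le> j + i - 1))"
proof -
  have "(p = 1 \<and> q = 0) \<or> (p = 0 \<and> q = 1) \<or> (p = i \<and> q = i + 1) \<or> (p = i + 1 \<and> q = i)"
    using assms by presburger
  then show ?thesis by auto
qed

locale mirror_partition = connected_simple_graph +
  fixes P :: "'a set set set"
  assumes partition_covers: "\<Union>P = edges E"
    and partition_disjoint: "\<forall>F1\<in>P. \<forall>F2\<in>P. F1 \<noteq> F2 \<longrightarrow> F1 \<inter> F2 = {}"
    and partition_mirror: "\<forall>F\<in>P. \<exists>\<alpha> A B. mirror_cut V E F \<alpha> A B"

lemma mirror_graph_partition:
  assumes "mirror_graph V E"
  shows "\<exists>P. mirror_partition V E P"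
proof -
  have graph: "connected_simple_graph V E"
    using assms unfolding mirror_graph_def connected_simple_graph_def by (elim conjE) (intro conjI)
  from assms obtain P where P: "\<Union>P = edges E" "\<forall>F1\<in>P. \<forall>F2\<in>P. F1 \<noteq> F2 \<longrightarrow> F1 \<inter> F2 = {}"
    and mirror: "\<And>F. F \<in> P \<Longrightarrow> \<exists>\<alpha>. automorphism V E \<alpha> \<and>
          (\<forall>u v. E u v \<and> {u, v} \<in> F \<longrightarrow> \<alpha> u = v \<and> \<alpha> v = u) \<and>
          (\<exists>A B. components V (delete_edges E F) = {A, B} \<and> A \<noteq> B \<and> \<alpha> ` A = B \<and> \<alpha> ` B = A \<and>
             (\<forall>u\<in>A. \<forall>w\<in>A. delete_edges E F u w \<longleftrightarrow> delete_edges E F (\<alpha> u) (\<alpha> w)) \<and>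
             (\<forall>u\<in>B. \<forall>w\<in>B. delete_edges E F u w \<longleftrightarrow> delete_edges E F (\<alpha> u) (\<alpha> w)))"
    unfolding mirror_graph_def by auto
  have cuts: "\<forall>F\<in>P. \<exists>\<alpha> A B. mirror_cut V E F \<alpha> A B"
  proof
    fix F assume "F \<in> P"
    obtain \<alpha> A B where "automorphism V E \<alpha>"
      "\<forall>u v. E u v \<and> {u, v} \<in> F \<longrightarrow> \<alpha> u = v \<and> \<alpha> v = u"
      "components V (delete_edges E F) = {A, B}" "A \<noteq> B" "\<alpha> ` A = B" "\<alpha> ` B = A"
      using mirror[OF \<open>F \<in> P\<close>] by (elim exE conjE) (rule that)
    then have "mirror_cut V E F \<alpha> A B"
      by (intro mirror_cut.intro[OF graph] mirror_cut_axioms.intro)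
    then show "\<exists>\<alpha> A B. mirror_cut V E F \<alpha> A B" by blast
  qed
  then have "mirror_partition V E P"
    by (intro mirror_partition.intro[OF graph] mirror_partition_axioms.intro[OF P])
  then show ?thesis ..
qed

context mirror_partition
begin

lemma edge_class_exists:
  assumes "E x y"
  shows "\<exists>F\<in>P. {x, y} \<in> F"
proof -
  have "{x, y} \<in> \<Union>P" using assms unfolding partition_covers edges_def by blast
  then show ?thesis by blast
qed

lemma edge_class_unique:
  assumes "F \<in> P" "F' \<in> P" "e \<in> F" "e \<in> F'"
  shows "F = F'"
proof (rule ccontr)
  assume "F \<noteq> F'"
  then have "F \<inter> F' = {}" using partition_disjoint assms(1,2) by blast
  then show False using assms(3,4) by blast
qed

lemma cut_with_side:
  assumes "F \<in> P" "x \<in> V"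
  obtains \<alpha> A B where "mirror_cut V E F \<alpha> A B" "x \<in> A"
proof -
  obtain \<alpha> A B where cut: "mirror_cut V E F \<alpha> A B" using partition_mirror assms(1) by blast
  show ?thesis
  proof (cases "x \<in> A")
    case True
    with cut show ?thesis by (rule that)
  next
    case False
    then have "x \<in> B" using mirror_cut.sides_cover[OF cut assms(2)] by blast
    with mirror_cut.mirror_cut_swap[OF cut] show ?thesis by (rule that)
  qed
qed

lemma Theta_iff_same_class:
  assumes "E a b" "E x y" "F \<in> P" "{x, y} \<in> F"
  shows "Theta V E a b x y \<longleftrightarrow> {a, b} \<in> F"
proof -
  obtain \<alpha> A B where cut: "mirror_cut V E F \<alpha> A B" and "x \<in> A"
    using cut_with_side[OF assms(3)] adj_in_V[OF assms(2)] by metis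
  show ?thesis using mirror_cut.Theta_cut_edge_iff[OF cut assms(1,2,4) \<open>x \<in> A\<close>] .
qed

end

subsection \<open>Convex even cycles\<close>

locale mirror_convex_cycle = mirror_partition +
  fixes v :: "nat \<Rightarrow> 'a" and i :: nat
  assumes two_le_i: "2 \<le> i" and convex: "convex_cycle V E v (2 * i)"
begin

abbreviation "n \<equiv> 2 * i"
abbreviation "C \<equiv> v ` {..<n}"

lemma cycle: "is_cycle V E v n"
  using convex unfolding convex_cycle_def by blast

lemma cycle_vertex: "k < n \<Longrightarrow> v k \<in> V"
  using cycle unfolding is_cycle_def by blast

lemma cycle_vertex_eq_iff: "p < n \<Longrightarrow> q < n \<Longrightarrow> v p = v q \<longleftrightarrow> p = q"
  using cycle unfolding is_cycle_def inj_on_def by blast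

lemma cycle_adj: "E (v (t mod n)) (v (Suc t mod n))"
proof -
  have "t mod n < n" using two_le_i by simp
  then have "E (v (t mod n)) (v (Suc (t mod n) mod n))" using cycle unfolding is_cycle_def by blast
  then show ?thesis by (simp add: mod_Suc_eq)
qed

lemma geodesic_in_cycle:
  assumes "walk V E xs" "hd xs \<in> C" "last xs \<in> C" "length xs = Suc (d (hd xs) (last xs))"
  shows "set xs \<subseteq> C" "k < length xs - 1 \<Longrightarrow> {xs ! k, xs ! Suc k} \<in> cycle_edges v n"
  using convex assms unfolding convex_cycle_def by blast+

lemma cycle_edge_indices:
  assumes "{v r, v r'} \<in> cycle_edges v n" "r < n" "r' < n"
  shows "r' = Suc r mod n \<or> r = Suc r' mod n"
proof -
  obtain m where m: "m < n" "{v r, v r'} = {v m, v (Suc m mod n)}"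
    using assms(1) unfolding cycle_edges_def by blast
  have "Suc m mod n < n" using two_le_i by simp
  then show ?thesis
    using m assms(2,3) cycle_vertex_eq_iff by (auto simp: doubleton_eq_iff)
qed

definition arc :: "nat \<Rightarrow> nat \<Rightarrow> 'a list" where
  "arc s m = map (\<lambda>t. v ((s + t) mod n)) [0..<Suc m]"

lemma arc_walk: "walk V E (arc s m)"
proof -
  have "v (t mod n) \<in> V" for t using cycle_vertex two_le_i by simp
  moreover have "E (v ((s + t) mod n)) (v ((s + Suc t) mod n))" for t
    using cycle_adj[of "s + t"] by simp
  ultimately show ?thesis unfolding walk_def arc_def by (auto simp del: upt_Suc)
qed

lemma arc_ends:
  "hd (arc s m) = v (s mod n)" "last (arc s m) = v ((s + m) mod n)" "length (arc s m) = Suc m"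
  unfolding arc_def by (simp_all add: hd_map last_map del: upt_Suc)

lemma set_arc: "set (arc s m) = {v ((s + t) mod n) | t. t \<le> m}"
  unfolding arc_def by (auto simp del: upt_Suc)

lemma gdist_cycle_le:
  assumes "p < n" "q < n"
  shows "d (v p) (v q) \<le> cyc_dist n p q"
proof -
  have arc_le: "d (v (s mod n)) (v ((s + m) mod n)) \<le> m" for s m
    using gdist_le_walk[OF arc_walk arc_ends(1,2)] arc_ends(3) by simp
  have "d (v p) (v q) \<le> cyc_dist n p q" if "p \<le> q" "p < n" "q < n" for p q
  proof -
    have "d (v p) (v q) \<le> q - p" using arc_le[of p "q - p"] that by simp
    moreover have "(q + (n - (q - p))) mod n = p" using that by (simp add: add.commute)
    then have "d (v q) (v p) \<le> n - (q - p)" using arc_le[of q "n - (q - p)"] that by simp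
    ultimately show ?thesis
      using that gdist_sym[OF cycle_vertex cycle_vertex] unfolding cyc_dist_def by fastforce
  qed
  then show ?thesis
    using assms gdist_sym[OF cycle_vertex cycle_vertex] cyc_dist_sym by (metis nat_le_linear)
qed

text \<open>Convexity forces a shortest path between cycle vertices to run along the cycle, and each
  cycle edge changes the cyclic distance to the start by at most one.\<close>

lemma cyc_dist_le_gdist:
  assumes p: "p < n" and q: "q < n"
  shows "cyc_dist n p q \<le> d (v p) (v q)"
proof -
  obtain xs where xs: "walk V E xs" "hd xs = v p" "last xs = v q" "length xs = Suc (d (v p) (v q))"
    using shortest_walk_exists cycle_vertex assms by blast
  then have "xs \<noteq> []" by (simp add: walk_def)
  note on_cycle = geodesic_in_cycle[OF xs(1), unfolded xs(2-4)]
  have "\<exists>r<n. xs ! k = v r \<and> cyc_dist n p r \<le> k" if "k < length xs" for k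
    using that
  proof (induction k)
    case 0
    then show ?case using xs \<open>xs \<noteq> []\<close> p by (intro exI[of _ p]) (simp add: hd_conv_nth cyc_dist_def)
  next
    case (Suc k)
    then obtain r where r: "r < n" "xs ! k = v r" "cyc_dist n p r \<le> k" by auto
    have "xs ! Suc k \<in> C" using on_cycle(1) p q Suc.prems nth_mem by blast
    then obtain r' where r': "r' < n" "xs ! Suc k = v r'" by auto
    have "{v r, v r'} \<in> cycle_edges v n" using on_cycle(2)[of k] p q Suc.prems r r' xs(4) by simp
    then have "cyc_dist n p r' \<le> Suc (cyc_dist n p r)"
      using cyc_dist_adj_le[OF p r(1) r'(1)] cycle_edge_indices r(1) r'(1) by blast
    then show ?case using r r' by (intro exI[of _ r']) simp
  qed
  from this[of "length xs - 1"] obtain r where r: "r < n" "xs ! (length xs - 1) = v r"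
    "cyc_dist n p r \<le> length xs - 1"
    using \<open>xs \<noteq> []\<close> by auto
  have "v r = v q" using r(2) xs(3) \<open>xs \<noteq> []\<close> by (simp add: last_conv_nth)
  then show ?thesis using r cycle_vertex_eq_iff q xs(4) by simp
qed

lemma gdist_cycle: "p < n \<Longrightarrow> q < n \<Longrightarrow> d (v p) (v q) = cyc_dist n p q"
  using gdist_cycle_le cyc_dist_le_gdist by (simp add: order_antisym)

lemma antipode_index: "1 \<le> j \<Longrightarrow> j \<le> i \<Longrightarrow> (j + i) mod n = (if j = i then 0 else j + i)"
  by (auto simp: mult_2)

lemma antipodal_edge_same_class:
  assumes j: "1 \<le> j" "j \<le> i" and F: "F \<in> P" "{v (j - 1), v j} \<in> F"
  shows "{v (j + i - 1), v ((j + i) mod n)} \<in> F"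
proof -
  define q where "q = (j + i) mod n"
  have q_eq: "q = (if j = i then 0 else j + i)" using antipode_index[OF j] unfolding q_def .
  have idx: "j - 1 < n" "j < n" "j + i - 1 < n" "q < n" using j two_le_i q_eq by auto
  have e1: "E (v (j - 1)) (v j)" using cycle_adj[of "j - 1"] idx j by simp
  have e2: "E (v (j + i - 1)) (v q)" using cycle_adj[of "j + i - 1"] idx j unfolding q_def by simp
  have "d (v (j + i - 1)) (v (j - 1)) = i" "d (v q) (v j) = i"
    "d (v (j + i - 1)) (v j) = i - 1" "d (v q) (v (j - 1)) = i - 1"
    using idx j q_eq by (simp_all add: gdist_cycle cyc_dist_def)
  then have "Theta V E (v (j + i - 1)) (v q) (v (j - 1)) (v j)"
    using two_le_i unfolding Theta_def by simp
  then show ?thesis using Theta_iff_same_class[OF e2 e1 F] unfolding q_def by blast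
qed

lemma cycle_two_arcs:
  assumes "s < n" "k < n"
  shows "v k \<in> set (arc s (i - 1)) \<union> set (arc (s + i) (i - 1))"
proof -
  define t where "t = (k + n - s) mod n"
  have "t < n" unfolding t_def using two_le_i by simp
  have "(s + t) mod n = (s + (k + n - s)) mod n" unfolding t_def by (simp add: mod_add_right_eq)
  also have "\<dots> = k" using assms by simp
  finally have k: "(s + t) mod n = k" .
  show ?thesis
  proof (cases "t \<le> i - 1")
    case True
    then show ?thesis using k unfolding set_arc by blast
  next
    case False
    then have "s + i + (t - i) = s + t" "t - i \<le> i - 1" using \<open>t < n\<close> by auto
    then show ?thesis using k unfolding set_arc by (metis (mono_tags, lifting) UnI2 mem_Collect_eq)
  qed
qed

text \<open>The reflected arc is a geodesic between cycle vertices, so convexity keeps it on the cycle.\<close>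

lemma reflected_arc_in_cycle:
  assumes cut: "mirror_cut V E F \<alpha> A B"
    and ends: "\<alpha> (v (s mod n)) = v p" "\<alpha> (v ((s + m) mod n)) = v q" "p < n" "q < n"
    and "cyc_dist n p q = m"
  shows "\<alpha> ` set (arc s m) \<subseteq> C"
proof -
  have "walk V E (map \<alpha> (arc s m))"
    using walk_map[OF arc_walk] mirror_cut.reflect_in_V[OF cut] mirror_cut.reflect_adj[OF cut]
    by blast
  moreover have "hd (map \<alpha> (arc s m)) = v p" "last (map \<alpha> (arc s m)) = v q"
    "length (map \<alpha> (arc s m)) = Suc m"
    using ends by (simp_all add: hd_map last_map arc_ends arc_def del: upt_Suc)
  ultimately show ?thesis
    using geodesic_in_cycle(1)[of "map \<alpha> (arc s m)"] ends gdist_cycle assms(6) by simp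
qed

lemma reflection_preserves_cycle:
  assumes j: "1 \<le> j" "j \<le> i" and F: "F \<in> P" "{v (j - 1), v j} \<in> F"
    and cut: "mirror_cut V E F \<alpha> A B" and k: "k < n"
  shows "\<alpha> (v k) \<in> C"
proof -
  define q where "q = (j + i) mod n"
  have q_eq: "q = (if j = i then 0 else j + i)" using antipode_index[OF j] unfolding q_def .
  have idx: "j - 1 < n" "j < n" "j + i - 1 < n" "q < n" using j two_le_i q_eq by auto
  have e1: "E (v (j - 1)) (v j)" using cycle_adj[of "j - 1"] idx j by simp
  have e2: "E (v (j + i - 1)) (v q)" using cycle_adj[of "j + i - 1"] idx j unfolding q_def by simp
  have F2: "{v (j + i - 1), v q} \<in> F" using antipodal_edge_same_class[OF j F] unfolding q_def .
  note reflect = mirror_cut.reflect_cut_edge[OF cut]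
  have swaps: "\<alpha> (v (j - 1)) = v j" "\<alpha> (v j) = v (j - 1)"
    "\<alpha> (v (j + i - 1)) = v q" "\<alpha> (v q) = v (j + i - 1)"
    using reflect[OF e1 F(2)] reflect[OF adj_sym[OF e1]] reflect[OF e2 F2] reflect[OF adj_sym[OF e2]]
      F(2) F2 by (simp_all add: insert_commute)
  have "\<alpha> ` set (arc j (i - 1)) \<subseteq> C"
  proof (rule reflected_arc_in_cycle[OF cut])
    show "\<alpha> (v (j mod n)) = v (j - 1)" "\<alpha> (v ((j + (i - 1)) mod n)) = v q"
      using swaps idx j by simp_all
    show "cyc_dist n (j - 1) q = i - 1" using q_eq j by (auto simp: cyc_dist_def)
  qed (use idx in auto)
  moreover have "\<alpha> ` set (arc (j + i) (i - 1)) \<subseteq> C"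
  proof (rule reflected_arc_in_cycle[OF cut])
    have "j + i + (i - 1) = (j - 1) + n" using j by simp
    then have "(j + i + (i - 1)) mod n = j - 1" using idx(1) by (metis mod_add_self2 mod_less)
    then show "\<alpha> (v ((j + i) mod n)) = v (j + i - 1)" "\<alpha> (v ((j + i + (i - 1)) mod n)) = v j"
      using swaps unfolding q_def by simp_all
    show "cyc_dist n (j + i - 1) j = i - 1" using j by (auto simp: cyc_dist_def)
  qed (use idx in auto)
  ultimately show ?thesis using cycle_two_arcs[OF idx(2) k] by blast
qed

lemma W_cycle_edge:
  assumes "1 \<le> j" "j \<le> i" "F \<in> P" "{v (j - 1), v j} \<in> F"
  obtains \<alpha> A B where "mirror_cut V E F \<alpha> A B" "W V E (v j) (v (j - 1)) = A"
proof -
  have idx: "j - 1 < n" "j < n" using assms two_le_i by auto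
  have e: "E (v j) (v (j - 1))" using adj_sym cycle_adj[of "j - 1"] idx assms(1) by simp
  obtain \<alpha> A B where cut: "mirror_cut V E F \<alpha> A B" and "v j \<in> A"
    using cut_with_side[OF assms(3) cycle_vertex[OF idx(2)]] by metis
  with e assms(4) have "W V E (v j) (v (j - 1)) = A"
    using mirror_cut.W_cut_edge[OF cut] by (simp add: insert_commute)
  with cut show ?thesis by (rule that)
qed

text \<open>A vertex lies on the same side of a cut of a cycle edge as its nearest cycle vertex,
  because the reflection of that cut maps the cycle to itself.\<close>

lemma W_nearest_cycle_vertex:
  assumes j: "1 \<le> j" "j \<le> i" and w: "w \<in> V"
    and p: "p < n" "\<forall>k<n. d w (v p) \<le> d w (v k)"
  shows "w \<in> W V E (v j) (v (j - 1)) \<longleftrightarrow> v p \<in> W V E (v j) (v (j - 1))"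
proof -
  have "E (v (j - 1)) (v j)" using cycle_adj[of "j - 1"] j two_le_i by simp
  then obtain F where F: "F \<in> P" "{v (j - 1), v j} \<in> F" using edge_class_exists by blast
  then obtain \<alpha> A B where cut: "mirror_cut V E F \<alpha> A B" and W: "W V E (v j) (v (j - 1)) = A"
    using W_cycle_edge[OF j] by metis
  have not_closer: "\<not> d w (\<alpha> (v p)) < d w (v p)"
    using reflection_preserves_cycle[OF j F cut p(1)] p(2) by auto
  have "v p \<in> V" using cycle_vertex p(1) by blast
  then consider "w \<in> A" "v p \<in> A" | "w \<in> B" "v p \<in> B" | "w \<in> A" "v p \<in> B" | "w \<in> B" "v p \<in> A"
    using mirror_cut.sides_cover[OF cut] w by blast
  then show ?thesis
  proof cases
    case 3
    then show ?thesis using not_closer mirror_cut.gdist_reflect_less[OF cut] by blast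
  next
    case 4
    then show ?thesis
      using not_closer mirror_cut.gdist_reflect_less[OF mirror_cut.mirror_cut_swap[OF cut]] by blast
  qed (use W mirror_cut.sides_disjoint[OF cut] in auto)
qed

lemma W_cycle_vertex_iff:
  assumes "1 \<le> j" "j \<le> i" "k < n"
  shows "v k \<in> W V E (v j) (v (j - 1)) \<longleftrightarrow> j \<le> k \<and> k \<le> j + i - 1"
proof -
  have "j - 1 < n" "j < n" using assms two_le_i by auto
  then show ?thesis
    using gdist_cycle assms cycle_vertex cyc_dist_closer_iff[OF assms] unfolding W_def by simp
qed

lemma W_cycle_position:
  assumes "w \<in> V"
  obtains p where "p < n" "\<And>j. 1 \<le> j \<Longrightarrow> j \<le> i \<Longrightarrow>
    w \<in> W V E (v j) (v (j - 1)) \<longleftrightarrow> j \<le> p \<and> p \<le> j + i - 1"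
proof -
  have "0 < n" using two_le_i by simp
  then obtain p where p: "p < n" "\<forall>k<n. d w (v p) \<le> d w (v k)"
    using ex_has_least_nat[of "\<lambda>k. k < n" 0 "\<lambda>k. d w (v k)"] by blast
  show ?thesis
    using that[OF p(1)] W_nearest_cycle_vertex[OF _ _ assms p] W_cycle_vertex_iff[OF _ _ p(1)] by blast
qed

lemma Theta_edge_separated:
  assumes ab: "E a b" "Theta V E a b (v 0) (v 1)"
  shows "a \<in> W V E (v 1) (v 0) \<longleftrightarrow> b \<notin> W V E (v 1) (v 0)"
proof -
  have "E (v 0) (v 1)" using cycle_adj[of 0] two_le_i by simp
  then obtain F0 where F0: "F0 \<in> P" "{v 0, v 1} \<in> F0" using edge_class_exists by blast
  then have "{a, b} \<in> F0" using Theta_iff_same_class[OF ab(1) \<open>E (v 0) (v 1)\<close>] ab(2) by blast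
  obtain \<alpha> A B where cut: "mirror_cut V E F0 \<alpha> A B" and "W V E (v 1) (v (1 - 1)) = A"
    using W_cycle_edge[of 1 F0] F0 two_le_i by auto
  then show ?thesis using mirror_cut.cut_edge_separates[OF cut ab(1) \<open>{a, b} \<in> F0\<close>] by simp
qed

lemma Theta_edge_same_side:
  assumes ab: "E a b" "Theta V E a b (v 0) (v 1)" and j: "2 \<le> j" "j \<le> i"
  shows "a \<in> W V E (v j) (v (j - 1)) \<longleftrightarrow> b \<in> W V E (v j) (v (j - 1))"
proof -
  have idx: "j - 1 < n" "j < n" "0 < n" "1 < n" using j two_le_i by auto
  have e0: "E (v 0) (v 1)" and e1: "E (v (j - 1)) (v j)"
    using cycle_adj[of 0] cycle_adj[of "j - 1"] idx j by simp_all
  obtain F where F: "F \<in> P" "{v (j - 1), v j} \<in> F" using edge_class_exists[OF e1] by blast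
  have "d (v 0) (v (j - 1)) + d (v 1) (v j) = d (v 0) (v j) + d (v 1) (v (j - 1))"
    using idx j by (simp add: gdist_cycle cyc_dist_def)
  then have "{v 0, v 1} \<notin> F" using Theta_iff_same_class[OF e0 e1 F] unfolding Theta_def by blast
  obtain F0 where F0: "F0 \<in> P" "{v 0, v 1} \<in> F0" using edge_class_exists[OF e0] by blast
  then have "{a, b} \<in> F0" using Theta_iff_same_class[OF ab(1) e0] ab(2) by blast
  then have "{a, b} \<notin> F"
    using edge_class_unique[OF F(1) F0(1)] F0(2) \<open>{v 0, v 1} \<notin> F\<close> by blast
  obtain \<alpha> A B where cut: "mirror_cut V E F \<alpha> A B" and W: "W V E (v j) (v (j - 1)) = A"
    using W_cycle_edge[of j F] F j by (metis one_le_numeral order_trans)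
  show ?thesis using mirror_cut.non_cut_edge_same_side[OF cut ab(1) \<open>{a, b} \<notin> F\<close>] unfolding W .
qed

lemma Theta_edge_W_dichotomy:
  assumes ab: "E a b" "Theta V E a b (v 0) (v 1)"
  shows "(\<forall>j\<in>{2..i}. a \<in> W V E (v j) (v (j - 1)) \<and> b \<in> W V E (v j) (v (j - 1))) \<or>
         (\<forall>j\<in>{2..i}. a \<notin> W V E (v j) (v (j - 1)) \<and> b \<notin> W V E (v j) (v (j - 1)))"
proof -
  have "a \<in> V" "b \<in> V" using adj_in_V ab(1) by auto
  obtain p q where "p < n" "q < n"
    and side_a: "\<And>j. 1 \<le> j \<Longrightarrow> j \<le> i \<Longrightarrow> a \<in> W V E (v j) (v (j - 1)) \<longleftrightarrow> j \<le> p \<and> p \<le> j + i - 1"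
    and side_b: "\<And>j. 1 \<le> j \<Longrightarrow> j \<le> i \<Longrightarrow> b \<in> W V E (v j) (v (j - 1)) \<longleftrightarrow> j \<le> q \<and> q \<le> j + i - 1"
    using W_cycle_position[OF \<open>a \<in> V\<close>] W_cycle_position[OF \<open>b \<in> V\<close>] by metis
  have "1 \<le> p \<and> p \<le> i \<longleftrightarrow> \<not> (1 \<le> q \<and> q \<le> i)"
    using Theta_edge_separated[OF ab] side_a[of 1] side_b[of 1] two_le_i by simp
  moreover have "2 \<le> p \<and> p \<le> i + 1 \<longleftrightarrow> 2 \<le> q \<and> q \<le> i + 1"
    using Theta_edge_same_side[OF ab, of 2] side_a[of 2] side_b[of 2] two_le_i by simp
  moreover have "i \<le> p \<and> p \<le> 2 * i - 1 \<longleftrightarrow> i \<le> q \<and> q \<le> 2 * i - 1"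
    using Theta_edge_same_side[OF ab, of i] side_a[of i] side_b[of i] two_le_i by (simp add: mult_2)
  ultimately have "(\<forall>j\<in>{2..i}. j \<le> p \<and> p \<le> j + i - 1 \<and> j \<le> q \<and> q \<le> j + i - 1) \<or>
      (\<forall>j\<in>{2..i}. \<not> (j \<le> p \<and> p \<le> j + i - 1) \<and> \<not> (j \<le> q \<and> q \<le> j + i - 1))"
    by (rule half_cycle_dichotomy[OF two_le_i \<open>p < n\<close> \<open>q < n\<close>])
  then show ?thesis using side_a side_b by auto
qed

end

theorem lemma7:
  fixes V :: "'a set" and E :: "'a \<Rightarrow> 'a \<Rightarrow> bool" and v :: "nat \<Rightarrow> 'a" and i :: nat and a b :: 'a
  assumes "mirror_graph V E"
    and "i \<ge> 2"
    and "convex_cycle V E v (2 * i)"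
    and "E a b"
    and "Theta V E a b (v 0) (v 1)"
  shows "(a \<in> (\<Inter>j\<in>{2..i}. W V E (v j) (v (j - 1))) \<and> b \<in> (\<Inter>j\<in>{2..i}. W V E (v j) (v (j - 1))))
       \<or> (a \<in> (\<Inter>j\<in>{2..i}. V - W V E (v j) (v (j - 1))) \<and> b \<in> (\<Inter>j\<in>{2..i}. V - W V E (v j) (v (j - 1))))"
proof -
  obtain P where "mirror_partition V E P" using mirror_graph_partition[OF assms(1)] by blast
  then interpret mirror_convex_cycle V E P v i
    using assms(2,3) by (intro mirror_convex_cycle.intro mirror_convex_cycle_axioms.intro)
  have "a \<in> V" "b \<in> V" using adj_in_V assms(4) by auto
  then show ?thesis using Theta_edge_W_dichotomy[OF assms(4,5)] by blast
qed

end
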